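(* Let $G$ be a $K_{2,3}$-saturated graph with vertex set $V$ and let $\alpha \in V$. Define $V_1 = N[\alpha] \cup \{v \in V : |N(v)\cap N(\alpha)| = 2\}$, $\mathcal U_2 = \{v \in V\setminus V_1 : |N(v)\cap N(\alpha)| = 1\}$, and $\mathcal U_3 = V \setminus (V_1\cup \mathcal U_2)$. For $b \in \mathcal U_2$ let $\omega(b) = |N(b)\cap V_1| + \tfrac12 |N(b)\cap \mathcal U_2|$. Let $x^* \in N(\alpha)$ satisfy $|N(x^* )\cap N(\alpha)| \leq 1$. Then: (i) if $y \in \mathcal U_2$ and $x^*$ is the unique common neighbor of $\alpha$ and $y$, then $\omega(y) \geq 1.5$, and if $\omega(y) = 1.5$ then there exist $x \in N(\alpha)\cap N(x^* )$ and $y' \in N(x)$ such that $N(y)\cap \mathcal U_2 = \{y'\}$; (ii) if $z \in \mathcal U_3$, then $$|N(z)\cap (V\setminus \mathcal U_3)| \geq 1 + \big|\{x \in N(\alpha) : N(z)\cap N(x)\cap \mathcal U_2 \neq \emptyset\}\big|.$$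
   Context: All graphs are finite and simple; $N(x)$ is the set of neighbors of $x$ and $N[x] = N(x)\cup\{x\}$. A graph $G$ is $K_{2,3}$-saturated if $G$ contains no subgraph isomorphic to $K_{2,3}$, but for every pair of nonadjacent vertices $u,v$, the graph $G+uv$ contains a subgraph isomorphic to $K_{2,3}$. *)

theory Defs
  imports Complex_Main
begin

definition simple_graph :: "'a set \<Rightarrow> ('a \<Rightarrow> 'a \<Rightarrow> bool) \<Rightarrow> bool" where
  "simple_graph V E \<longleftrightarrow> finite V \<and> (\<forall>x y. E x y \<longrightarrow> x \<in> V \<and> y \<in> V)
     \<and> (\<forall>x y. E x y \<longrightarrow> E y x) \<and> (\<forall>x. \<not> E x x)"

definition nbhd :: "'a set \<Rightarrow> ('a \<Rightarrow> 'a \<Rightarrow> bool) \<Rightarrow> 'a \<Rightarrow> 'a set" where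
  "nbhd V E x = {y \<in> V. E x y}"

definition cnbhd :: "'a set \<Rightarrow> ('a \<Rightarrow> 'a \<Rightarrow> bool) \<Rightarrow> 'a \<Rightarrow> 'a set" where
  "cnbhd V E x = insert x (nbhd V E x)"

definition has_K23 :: "'a set \<Rightarrow> ('a \<Rightarrow> 'a \<Rightarrow> bool) \<Rightarrow> bool" where
  "has_K23 V E \<longleftrightarrow> (\<exists>a\<in>V. \<exists>b\<in>V. \<exists>c\<in>V. \<exists>d\<in>V. \<exists>e\<in>V.
     distinct [a, b, c, d, e] \<and>
     E a c \<and> E a d \<and> E a e \<and> E b c \<and> E b d \<and> E b e)"

definition add_edge :: "('a \<Rightarrow> 'a \<Rightarrow> bool) \<Rightarrow> 'a \<Rightarrow> 'a \<Rightarrow> ('a \<Rightarrow> 'a \<Rightarrow> bool)" where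
  "add_edge E u v = (\<lambda>x y. E x y \<or> (x = u \<and> y = v) \<or> (x = v \<and> y = u))"

definition K23_saturated :: "'a set \<Rightarrow> ('a \<Rightarrow> 'a \<Rightarrow> bool) \<Rightarrow> bool" where
  "K23_saturated V E \<longleftrightarrow> simple_graph V E \<and> \<not> has_K23 V E \<and>
     (\<forall>u\<in>V. \<forall>v\<in>V. u \<noteq> v \<and> \<not> E u v \<longrightarrow> has_K23 V (add_edge E u v))"

end

theory Submission
  imports Defs
begin

text \<open>
  Two graph-theoretic facts
  drive everything: (a) in a K_{2,3}-free graph two vertices have at most two common
  neighbours, and (b) in a saturated graph, for every non-edge uv, one endpoint u and some
  neighbour b of the other endpoint v have two further common neighbours (the K_{2,3} created
  by adding uv).  Applied to the non-edge \<alpha>v for v outside V1, (b) yields either a neighbour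
  of v in V1, or a neighbour b of \<alpha> sharing two neighbours in V1 \<union> U2 with v.
  Part (i) then follows from an elementary counting lemma for the weight \<omega>; part (ii) from
  an injection of the counted neighbours of \<alpha> into N(z) \<inter> U2 (every vertex of U2 is
  attached to a unique neighbour of \<alpha>), which by (b) misses some neighbour of z in V1 \<union> U2.
\<close>

lemma K23_free_common_nbhd_le2:
  assumes sg: "simple_graph V E" and nk: "\<not> has_K23 V E"
    and ab: "a \<in> V" "b \<in> V" "a \<noteq> b"
  shows "card (nbhd V E a \<inter> nbhd V E b) \<le> 2"
proof (rule ccontr)
  let ?C = "nbhd V E a \<inter> nbhd V E b"
  assume "\<not> card ?C \<le> 2"
  then have "3 \<le> card ?C" by simp
  then obtain T where T: "T \<subseteq> ?C" "card T = 3"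
    by (rule obtain_subset_with_card_n)
  from T(2) obtain c d e where "T = {c, d, e}" "c \<noteq> d" "d \<noteq> e" "c \<noteq> e"
    unfolding card_3_iff by blast
  with T(1) have cde: "{c, d, e} \<subseteq> ?C" "c \<noteq> d" "d \<noteq> e" "c \<noteq> e"
    by simp_all
  then have edges: "E a c" "E a d" "E a e" "E b c" "E b d" "E b e" and V: "c \<in> V" "d \<in> V" "e \<in> V"
    by (auto simp: nbhd_def)
  moreover have "\<not> E x x" for x
    using sg by (simp add: simple_graph_def)
  ultimately have "distinct [a, b, c, d, e]"
    using cde ab by auto
  with edges V ab have "has_K23 V E"
    unfolding has_K23_def by blast
  with nk show False by simp
qed

text \<open>
  Adding the edge uv creates a K_{2,3} in which u is a vertex of the 2-side and v a vertex of
  the 3-side: some neighbour b of v and u have two further common neighbours d, e.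
\<close>
definition completes_K23 :: "'a set \<Rightarrow> ('a \<Rightarrow> 'a \<Rightarrow> bool) \<Rightarrow> 'a \<Rightarrow> 'a \<Rightarrow> bool" where
  "completes_K23 V E u v \<longleftrightarrow> (\<exists>b\<in>V. \<exists>d\<in>V. \<exists>e\<in>V.
     distinct [u, b, v, d, e] \<and> E b v \<and> E u d \<and> E u e \<and> E b d \<and> E b e)"

lemma completes_K23_from_new_edge:
  assumes V: "h \<in> V" "h' \<in> V" "l \<in> V" "l' \<in> V" "l'' \<in> V"
    and dst: "distinct [h, h', l, l', l'']"
    and new: "(h = u \<and> l = v) \<or> (h = v \<and> l = u)"
    and edges: "add_edge E u v h l'" "add_edge E u v h l''"
      "add_edge E u v h' l" "add_edge E u v h' l'" "add_edge E u v h' l''"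
  shows "completes_K23 V E h l"
proof -
  have "E h l'" "E h l''" "E h' l" "E h' l'" "E h' l''"
    using edges new dst unfolding add_edge_def by auto
  then show ?thesis unfolding completes_K23_def using V dst by fastforce
qed

text \<open>
  Saturation at a non-edge uv: the K_{2,3} of G + uv must use the new edge, whose endpoints
  lie on opposite sides, so one of u, v plays the 2-side role.
\<close>
lemma saturated_nonedge:
  assumes sat: "K23_saturated V E" and uv: "u \<in> V" "v \<in> V" "u \<noteq> v" "\<not> E u v"
  shows "completes_K23 V E u v \<or> completes_K23 V E v u"
proof -
  have nk: "\<not> has_K23 V E" and "has_K23 V (add_edge E u v)"
    using sat uv unfolding K23_saturated_def by auto
  then obtain a b c d e where V: "a \<in> V" "b \<in> V" "c \<in> V" "d \<in> V" "e \<in> V"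
    and dst: "distinct [a, b, c, d, e]"
    and edges: "add_edge E u v a c" "add_edge E u v a d" "add_edge E u v a e"
      "add_edge E u v b c" "add_edge E u v b d" "add_edge E u v b e"
    unfolding has_K23_def by blast
  define new where "new h l \<longleftrightarrow> (h = u \<and> l = v) \<or> (h = v \<and> l = u)" for h l
  have "\<not> (E a c \<and> E a d \<and> E a e \<and> E b c \<and> E b d \<and> E b e)"
    using nk V dst unfolding has_K23_def by blast
  moreover have edge_or_new: "E h l \<or> new h l" if "add_edge E u v h l" for h l
    using that unfolding add_edge_def new_def by blast
  ultimately have "new a c \<or> new a d \<or> new a e \<or> new b c \<or> new b d \<or> new b e"
    using edge_or_new[OF edges(1)] edge_or_new[OF edges(2)] edge_or_new[OF edges(3)]
      edge_or_new[OF edges(4)] edge_or_new[OF edges(5)] edge_or_new[OF edges(6)] by blast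
  then show ?thesis
  proof (elim disjE)
    assume "new a c" then show ?thesis
      using completes_K23_from_new_edge[of a V b c d e] V dst edges unfolding new_def by auto
  next
    assume "new a d" then show ?thesis
      using completes_K23_from_new_edge[of a V b d c e] V dst edges unfolding new_def by auto
  next
    assume "new a e" then show ?thesis
      using completes_K23_from_new_edge[of a V b e c d] V dst edges unfolding new_def by auto
  next
    assume "new b c" then show ?thesis
      using completes_K23_from_new_edge[of b V a c d e] V dst edges unfolding new_def by auto
  next
    assume "new b d" then show ?thesis
      using completes_K23_from_new_edge[of b V a d c e] V dst edges unfolding new_def by auto
  next
    assume "new b e" then show ?thesis
      using completes_K23_from_new_edge[of b V a e c d] V dst edges unfolding new_def by auto
  qed
qed

lemma half_weight_one_extra:
  assumes fin: "finite T" and disj: "A \<inter> B = {}"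
    and x: "x \<in> T \<inter> A" and w: "w \<in> T \<inter> (A \<union> B)" "w \<noteq> x"
  shows "3/2 \<le> real (card (T \<inter> A)) + real (card (T \<inter> B)) / 2"
    and "real (card (T \<inter> A)) + real (card (T \<inter> B)) / 2 = 3/2 \<Longrightarrow> T \<inter> A = {x} \<and> T \<inter> B = {w}"
proof -
  have cA: "1 \<le> card (T \<inter> A)"
    using x fin by (auto simp: Suc_le_eq card_gt_0_iff)
  have cases: "2 \<le> card (T \<inter> A) \<or> (w \<in> B \<and> 1 \<le> card (T \<inter> B))"
  proof (cases "w \<in> A")
    case True
    then have "{x, w} \<subseteq> T \<inter> A" using x w by auto
    then have "card {x, w} \<le> card (T \<inter> A)" using fin by (intro card_mono) auto
    then show ?thesis using w(2) by simp
  next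
    case False
    then have "w \<in> T \<inter> B" using w by auto
    then show ?thesis using fin by (auto simp: Suc_le_eq card_gt_0_iff)
  qed
  then show "3/2 \<le> real (card (T \<inter> A)) + real (card (T \<inter> B)) / 2"
    using cA by linarith
  assume "real (card (T \<inter> A)) + real (card (T \<inter> B)) / 2 = 3/2"
  with cases cA have wB: "w \<in> B" and cards: "card (T \<inter> A) = 1" "card (T \<inter> B) = 1"
    by linarith+
  have singleton: "S = {s}" if "card S = 1" "s \<in> S" for S :: "'a set" and s
    using that by (metis card_1_singletonE singletonD)
  show "T \<inter> A = {x} \<and> T \<inter> B = {w}"
    using singleton[OF cards(1)] singleton[OF cards(2)] x w wB by blast
qed

locale rooted_K23_saturated =
  fixes V :: "'a set" and E :: "'a \<Rightarrow> 'a \<Rightarrow> bool" and \<alpha> :: 'a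
  assumes saturated: "K23_saturated V E" and root: "\<alpha> \<in> V"
begin

abbreviation N :: "'a \<Rightarrow> 'a set" where "N \<equiv> nbhd V E"

definition V1 :: "'a set" where
  "V1 = cnbhd V E \<alpha> \<union> {v \<in> V. card (N v \<inter> N \<alpha>) = 2}"

definition U2 :: "'a set" where
  "U2 = {v \<in> V - V1. card (N v \<inter> N \<alpha>) = 1}"

definition U3 :: "'a set" where
  "U3 = V - (V1 \<union> U2)"

definition weight :: "'a \<Rightarrow> real" where
  "weight b = real (card (N b \<inter> V1)) + real (card (N b \<inter> U2)) / 2"

lemma simple: "simple_graph V E" and K23_free: "\<not> has_K23 V E"
  using saturated unfolding K23_saturated_def by simp_all

lemma edge_sym: "E x y \<Longrightarrow> E y x"
  using simple by (simp add: simple_graph_def)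

lemma mem_nbhd: "y \<in> N x \<longleftrightarrow> E x y"
  using simple by (auto simp: simple_graph_def nbhd_def)

lemma nbhd_sym: "x \<in> N y \<Longrightarrow> y \<in> N x"
  using mem_nbhd edge_sym by blast

lemma finite_nbhd: "finite (N x)"
  using simple by (simp add: simple_graph_def nbhd_def)

lemma common_nbhd_root_le2: "v \<in> V \<Longrightarrow> v \<noteq> \<alpha> \<Longrightarrow> card (N v \<inter> N \<alpha>) \<le> 2"
  using K23_free_common_nbhd_le2[OF simple K23_free] root by blast

lemma root_in_V1: "\<alpha> \<in> V1" and nbhd_root_subset_V1: "N \<alpha> \<subseteq> V1"
  unfolding V1_def cnbhd_def by auto

lemma V1_U2_disjoint: "V1 \<inter> U2 = {}"
  unfolding U2_def by auto

lemma V_minus_U3: "V - U3 = V1 \<union> U2"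
proof -
  have "V1 \<subseteq> V" using root unfolding V1_def cnbhd_def nbhd_def by auto
  moreover have "U2 \<subseteq> V" unfolding U2_def by auto
  ultimately show ?thesis unfolding U3_def by blast
qed

lemma outside_V1_nonadjacent: "v \<notin> V1 \<Longrightarrow> v \<noteq> \<alpha> \<and> \<not> E \<alpha> v"
  using root_in_V1 nbhd_root_subset_V1 mem_nbhd by auto

lemma second_nbhd_in_V1_U2:
  assumes "E \<alpha> b" "E b w" "w \<noteq> \<alpha>"
  shows "w \<in> V1 \<union> U2"
proof (cases "w \<in> V1")
  case False
  have wV: "w \<in> V" using assms(2) mem_nbhd[of w b] by (simp add: nbhd_def)
  have "b \<in> N w \<inter> N \<alpha>" using assms edge_sym mem_nbhd by auto
  then have "card (N w \<inter> N \<alpha>) \<noteq> 0" using finite_nbhd by auto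
  moreover have "card (N w \<inter> N \<alpha>) \<noteq> 2" using False wV unfolding V1_def by auto
  ultimately have "card (N w \<inter> N \<alpha>) = 1"
    using common_nbhd_root_le2[OF wV assms(3)] by linarith
  then show ?thesis unfolding U2_def using False wV by auto
qed simp

lemma U2_unique_attachment:
  assumes "u \<in> U2" "x \<in> N \<alpha> \<inter> N u" "x' \<in> N \<alpha> \<inter> N u"
  shows "x = x'"
proof -
  have "card (N u \<inter> N \<alpha>) = 1" using assms(1) unfolding U2_def by auto
  then obtain t where "N u \<inter> N \<alpha> = {t}" by (rule card_1_singletonE)
  moreover have "x \<in> N u \<inter> N \<alpha>" "x' \<in> N u \<inter> N \<alpha>" using assms(2,3) by auto
  ultimately show ?thesis by auto
qed

lemma U2_choice_inj:
  assumes "X \<subseteq> N \<alpha>" "\<And>x. x \<in> X \<Longrightarrow> f x \<in> N x \<inter> U2"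
  shows "inj_on f X"
proof (rule inj_onI)
  fix x x' assume xx: "x \<in> X" "x' \<in> X" "f x = f x'"
  then have "f x \<in> N x \<inter> U2" "f x \<in> N x'" using assms(2)[OF xx(1)] assms(2)[OF xx(2)] by auto
  with xx assms(1) have "f x \<in> U2" "x \<in> N \<alpha> \<inter> N (f x)" "x' \<in> N \<alpha> \<inter> N (f x)"
    using nbhd_sym by auto
  then show "x = x'" by (rule U2_unique_attachment)
qed

lemma outside_V1_witness:
  assumes v: "v \<in> V" "v \<notin> V1"
  shows "(\<exists>b \<in> N v \<inter> V1. card (N b \<inter> N \<alpha>) = 2) \<or>
         (\<exists>b \<in> N \<alpha>. \<exists>d e. d \<noteq> e \<and> {d, e} \<subseteq> N v \<inter> N b \<inter> (V1 \<union> U2))"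
proof -
  have "v \<noteq> \<alpha>" "\<not> E \<alpha> v" using outside_V1_nonadjacent[OF v(2)] by auto
  with saturated_nonedge[OF saturated root v(1)]
  consider "completes_K23 V E \<alpha> v" | "completes_K23 V E v \<alpha>" by auto
  then show ?thesis
  proof cases
    case 1
    then obtain b d e where b: "b \<in> V" "distinct [\<alpha>, b, v, d, e]"
      "E b v" "E \<alpha> d" "E \<alpha> e" "E b d" "E b e"
      unfolding completes_K23_def by blast
    have "{d, e} \<subseteq> N b \<inter> N \<alpha>" using b mem_nbhd by auto
    from card_mono[OF _ this] have "2 \<le> card (N b \<inter> N \<alpha>)"
      using b(2) finite_nbhd by auto
    with common_nbhd_root_le2[of b] b have "card (N b \<inter> N \<alpha>) = 2" by fastforce
    moreover then have "b \<in> N v \<inter> V1"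
      using b mem_nbhd edge_sym unfolding V1_def by auto
    ultimately show ?thesis by blast
  next
    case 2
    then obtain b d e where b: "distinct [v, b, \<alpha>, d, e]"
      "E b \<alpha>" "E v d" "E v e" "E b d" "E b e"
      unfolding completes_K23_def by blast
    have "{d, e} \<subseteq> V1 \<union> U2"
      using second_nbhd_in_V1_U2 b edge_sym by auto
    moreover have "b \<in> N \<alpha>" "{d, e} \<subseteq> N v \<inter> N b" using b mem_nbhd edge_sym by auto
    ultimately show ?thesis using b(1) by auto
  qed
qed

text \<open>
  Besides x* the vertex y has a neighbour in V1 \<union> U2, which gives \<omega>(y) \<ge> 3/2;
  in the equality case that extra neighbour is the unique U2-neighbour of y and is adjacent to
  a common neighbour of \<alpha> and x*.
\<close>
lemma weight_lower_bound:
  assumes y: "y \<in> U2" "N \<alpha> \<inter> N y = {xs}" and xs: "card (N xs \<inter> N \<alpha>) \<le> 1"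
  shows "3/2 \<le> weight y \<and>
    (weight y = 3/2 \<longrightarrow> (\<exists>x \<in> N \<alpha> \<inter> N xs. \<exists>y' \<in> N x. N y \<inter> U2 = {y'}))"
proof -
  have yV: "y \<in> V" "y \<notin> V1" using y(1) unfolding U2_def by auto
  have xs_in: "xs \<in> N y \<inter> V1" using y(2) nbhd_root_subset_V1 by auto
  note count = half_weight_one_extra[OF finite_nbhd V1_U2_disjoint xs_in]
  consider (V1_extra) w where "w \<in> N y \<inter> V1" "w \<noteq> xs"
    | (two_extra) w1 w2 where "w1 \<noteq> w2" "{w1, w2} \<subseteq> N y \<inter> (V1 \<union> U2) - {xs}"
    | (bridge) x w where "x \<in> N \<alpha> \<inter> N xs" "w \<in> N x \<inter> N y \<inter> (V1 \<union> U2)" "w \<noteq> xs"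
  proof -
    from outside_V1_witness[OF yV] show thesis
    proof (elim disjE bexE exE conjE)
      fix b assume "b \<in> N y \<inter> V1" "card (N b \<inter> N \<alpha>) = 2"
      with xs show thesis using V1_extra by fastforce
    next
      fix b d e assume b: "b \<in> N \<alpha>" "d \<noteq> e" "{d, e} \<subseteq> N y \<inter> N b \<inter> (V1 \<union> U2)"
      have "b \<in> N xs" if "xs \<in> {d, e}" using b that mem_nbhd edge_sym by auto
      then show thesis using b bridge[of b d] bridge[of b e] two_extra[of d e] by auto
    qed
  qed
  then show ?thesis
  proof cases
    case (V1_extra w)
    then show ?thesis using count[of w] V1_U2_disjoint unfolding weight_def by auto
  next
    case (two_extra w1 w2)
    then show ?thesis using count[of w1] count[of w2] unfolding weight_def by auto
  next
    case (bridge x w)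
    then show ?thesis using count[of w] unfolding weight_def by auto
  qed
qed

text \<open>
  Part (ii).  A vertex z \<in> U3 has, besides one U2-neighbour for each neighbour x of \<alpha> that it
  reaches through U2 (distinct by unique attachment), a further neighbour in V1 \<union> U2.
\<close>
lemma U3_nbhd_lower_bound:
  assumes z: "z \<in> U3"
  shows "1 + card {x \<in> N \<alpha>. N z \<inter> N x \<inter> U2 \<noteq> {}} \<le> card (N z \<inter> (V - U3))"
proof -
  define X where "X = {x \<in> N \<alpha>. N z \<inter> N x \<inter> U2 \<noteq> {}}"
  define f where "f x = (SOME u. u \<in> N z \<inter> N x \<inter> U2)" for x
  have f: "f x \<in> N z \<inter> N x \<inter> U2" if "x \<in> X" for x
    using that unfolding f_def X_def by (metis (mono_tags, lifting) ex_in_conv mem_Collect_eq someI_ex)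
  have XN: "X \<subseteq> N \<alpha>" unfolding X_def by auto
  have inj: "inj_on f X" using U2_choice_inj[OF XN] f by blast
  have fX: "f ` X \<subseteq> N z \<inter> U2" using f by blast
  have zV: "z \<in> V" "z \<notin> V1" using z unfolding U3_def by auto
  have "\<exists>w \<in> N z \<inter> (V1 \<union> U2). w \<notin> f ` X"
    using outside_V1_witness[OF zV]
  proof (elim disjE bexE exE conjE)
    fix b assume "b \<in> N z \<inter> V1"
    moreover then have "b \<notin> f ` X" using fX V1_U2_disjoint by auto
    ultimately show ?thesis by auto
  next
    fix b d e assume b: "b \<in> N \<alpha>" "d \<noteq> e" "{d, e} \<subseteq> N z \<inter> N b \<inter> (V1 \<union> U2)"
    have unique: "u = f b" if "u \<in> f ` X" "u \<in> N b" for u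
    proof -
      from that(1) obtain x where x: "x \<in> X" "u = f x" by blast
      have "x \<in> N \<alpha> \<inter> N u" "b \<in> N \<alpha> \<inter> N u" "u \<in> U2"
        using f[OF x(1)] x XN b(1) that(2) mem_nbhd edge_sym by auto
      then have "x = b" using U2_unique_attachment by blast
      then show ?thesis using x by simp
    qed
    have "d \<in> N b" "e \<in> N b" using b(3) by auto
    then have "d \<notin> f ` X \<or> e \<notin> f ` X" using unique[of d] unique[of e] b(2) by metis
    then show ?thesis using b(3) by auto
  qed
  then obtain w where w: "w \<in> N z \<inter> (V1 \<union> U2)" "w \<notin> f ` X" by blast
  have "insert w (f ` X) \<subseteq> N z \<inter> (V - U3)" using w f V_minus_U3 by blast
  then have "card (insert w (f ` X)) \<le> card (N z \<inter> (V - U3))"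
    by (intro card_mono) (simp_all add: finite_nbhd)
  moreover have "card (insert w (f ` X)) = 1 + card X"
  proof -
    have "finite X" using finite_subset[OF XN finite_nbhd] .
    then have "card (insert w (f ` X)) = Suc (card (f ` X))" using w(2) by simp
    then show ?thesis using card_image[OF inj] by simp
  qed
  ultimately show ?thesis using X_def by argo
qed

end

theorem corollary3p3:
  fixes V :: "'a set" and E :: "'a \<Rightarrow> 'a \<Rightarrow> bool" and \<alpha> xs :: 'a
  assumes sat: "K23_saturated V E"
    and alpha: "\<alpha> \<in> V"
    and xs: "xs \<in> nbhd V E \<alpha>" "card (nbhd V E xs \<inter> nbhd V E \<alpha>) \<le> 1"
  shows
    "let N = nbhd V E;
         V1 = cnbhd V E \<alpha> \<union> {v \<in> V. card (N v \<inter> N \<alpha>) = 2};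
         U2 = {v \<in> V - V1. card (N v \<inter> N \<alpha>) = 1};
         U3 = V - (V1 \<union> U2);
         \<omega> = (\<lambda>b. real (card (N b \<inter> V1)) + real (card (N b \<inter> U2)) / 2)
     in (\<forall>y \<in> U2. N \<alpha> \<inter> N y = {xs} \<longrightarrow>
           \<omega> y \<ge> 3/2 \<and>
           (\<omega> y = 3/2 \<longrightarrow> (\<exists>x \<in> N \<alpha> \<inter> N xs. \<exists>y' \<in> N x. N y \<inter> U2 = {y'})))
      \<and> (\<forall>z \<in> U3. card (N z \<inter> (V - U3)) \<ge>
           1 + card {x \<in> N \<alpha>. N z \<inter> N x \<inter> U2 \<noteq> {}})"
proof -
  interpret G: rooted_K23_saturated V E \<alpha>
    using sat alpha by unfold_locales
  show ?thesis
    unfolding Let_def G.V1_def[symmetric] G.U2_def[symmetric] G.U3_def[symmetric]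
      G.weight_def[symmetric]
    using G.weight_lower_bound[OF _ _ xs(2)] G.U3_nbhd_lower_bound by simp
qed

end
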